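(* If $\tau_V \cong_\psi \tau_W \circ \phi$, then for all $\alpha_1,\ldots,\alpha_n \in V$ and $\beta \in H(\overline{M}_{n,1}(C))$, $$ \tau_V( \alpha_1,\ldots, \alpha_n; \iota_\rho^* \beta) = \sum_{r,[I_1, \ldots,I_r]} \tau^r_W( \phi^{|I_1|}(\alpha_i, i \in I_1;\cdot),\ldots, \phi^{|I_r|}(\alpha_i, i \in I_r; \cdot); \cdot) ( \iota_{[I_1,\ldots,I_r]}^* \beta ), $$ where the $\cdot$'s denote insertion of the K\"unneth components of $\iota_{[I_1,\ldots,I_r]}^* \beta$.
   Context: Let $C$ be a smooth connected projective curve with area form $\omega_C$. Let $\overline{M}_{0,n+1}$ be the moduli space of stable genus zero $(n+1)$-marked curves, $\overline{M}_n(C)$ the moduli space of stable $n$-marked $C$-parametrized curves, $\overline{M}_{n,1}(\mathbb{A})$ the moduli space of stable $n$-marked scaled affine lines, and $\overline{M}_{n,1}(C)$ the moduli space of stable $n$-marked scaled curves parametrized by $C$. For $\rho \in \mathbb{C}$, $\iota_\rho: \overline{M}_n(C) \to \overline{M}_{n,1}(C)$ is the inclusion obtained by fixing the scaling $\rho\,\omega_C$, with dual class $\gamma_\rho \in H^2(\overline{M}_{n,1}(C))$. For each unordered partition $[I_1,\ldots,I_r]$ of $\{1,\ldots,n\}$, $\iota_{[I_1,\ldots,I_r]}: D_{[I_1,\ldots,I_r]} \to \overline{M}_{n,1}(C)$ is the boundary divisor where the scaling degenerates to infinity on the principal component and bubbles with finite scaling carry the markings $I_1,\ldots,I_r$, with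 $D_{[I_1,\ldots,I_r]} \cong \overline{M}_r(C) \times \prod_{j=1}^r \overline{M}_{|I_j|,1}(\mathbb{A})$; pull-backs are written via K\"unneth decompositions under this isomorphism. The homology class of $\iota_\rho(\overline{M}_n(C))$ equals the sum of the classes of the $D_{[I_1,\ldots,I_r]}$ over all unordered partitions. Let $V, W$ be CohFT algebras (vector spaces with $S_n$-invariant maps $\mu^n: V^n \times H(\overline{M}_{0,n+1}) \to V$ satisfying the splitting axiom), let $\phi = (\phi^n: V^n \times H(\overline{M}_{n,1}(\mathbb{A})) \to W)_{n \ge 0}$ be a morphism of CohFT algebras, and let $\tau_V = (\tau_V^n: V^n \times H(\overline{M}_n(C)) \to \Lambda)$, $\tau_W = (\tau_W^n: W^n \times H(\overline{M}_n(C)) \to \Lambda)$ be ($C$-based, $\Lambda$-valued) traces on $V$, $W$. A 2-morphism $\psi$ from $\phi\circ\tau_W$ to $\tau_V$, written $\tau_V \cong_\psi \tau_W \circ \phi$, is a collection of maps $\psi^n$ on $V^n \times H(\overline{M}_{n,1}(C))$ such that: (a) $\psi^n(\alpha; \beta \cup \gamma_\rho) = \tau_V(\alpha; \iota_\rho^*\beta)$; (b) for the divisor $D_I$ where markings $z_i, i\in I$ bubble off with zero scaling, with dual class $\gamma_I$, $\psi^n(\alpha;\beta\cup\gamma_I) = \psi^{n-|I|+1}(\alpha_j, j\notin I, \mu^{|I|}(\alpha_i, i\in I;\cdot);\cdot)(\iota_I^*\beta)$; (c) for a boundary divisor $D = \sum n_{[I_1,\ldots,I_r]} D_{[I_1,\ldots,I_r]}$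 with dual class $\gamma$, $\psi^n(\alpha;\beta\cup\gamma) = \sum_{[I_1,\ldots,I_r]} \tau_W^r(\phi^{|I_1|}(\alpha_i, i\in I_1;\cdot),\ldots,\phi^{|I_r|}(\alpha_i, i\in I_r;\cdot);\cdot)(\iota_{[I_1,\ldots,I_r]}^*\beta)$. *)

theory Defs
  imports Complex_Main "HOL-Library.Disjoint_Sets"
begin

(* Markings are indexed by {0..<n} (the paper's 1..n shifted by one).
   An unordered partition [I_1,...,I_r] of the markings is a set partition
   (library notion partition_on). *)

definition set_partitions :: "nat \<Rightarrow> nat set set set" where
  "set_partitions n = {P. partition_on {..<n} P}"

(* The blocks of a partition listed in a canonical order (by minimal element);
   this fixes the order I_1,...,I_r used to write the Kuenneth components. *)
definition ordered_blocks :: "nat set set \<Rightarrow> nat set list" where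
  "ordered_blocks P = map (\<lambda>m. THE I. I \<in> P \<and> Min I = m) (sorted_list_of_set (Min ` P))"

(* The boundary term tau_W^r applied to phi of the alphas in the blocks I_1..I_r,
   evaluated on the pullback of beta to D_P, which is given by its Kuenneth decomposition:
   a finite list of pure tensors (c, [a_1,...,a_r]) with c in H(M_r(C)) and
   a_j in H(M_{card I_j,1}(A)). *)
definition bdry_term ::
  "('w list \<Rightarrow> 'hc \<Rightarrow> 'l::comm_monoid_add) \<Rightarrow> ('v list \<Rightarrow> 'ha \<Rightarrow> 'w)
   \<Rightarrow> (nat \<Rightarrow> nat set set \<Rightarrow> 'h \<Rightarrow> ('hc \<times> 'ha list) list)
   \<Rightarrow> 'v list \<Rightarrow> nat set set \<Rightarrow> 'h \<Rightarrow> 'l" where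
  "bdry_term tauW phi pbD \<alpha> P \<beta> =
     sum_list (map (\<lambda>(c, as). tauW (map (\<lambda>(I, a). phi (nths \<alpha> I) a) (zip (ordered_blocks P) as)) c)
                   (pbD (length \<alpha>) P \<beta>))"

(* tau_V \<cong>_psi tau_W o phi : conditions (a), (b), (c).
   Data (n = number of markings = length of the argument list):
   - cup product on H(M_{n,1}(C)) is the multiplication;  PD sends homology classes to dual cohomology classes;
   - clsRho rho n = [iota_rho(M_n(C))],  pbRho rho n = iota_rho^*;
   - clsI n I = [D_I],  pbI n I beta = Kuenneth decomposition of iota_I^* beta in
     H(M_{n-card I+1,1}(C)) tensor H(M_{0,card I+1});
   - clsD n P = [D_P],  pbD n P beta = Kuenneth decomposition of iota_P^* beta. *)
definition two_morphism ::
  "('v list \<Rightarrow> 'hc \<Rightarrow> 'l::comm_monoid_add) \<Rightarrow> ('w list \<Rightarrow> 'hc \<Rightarrow> 'l) \<Rightarrow> ('v list \<Rightarrow> 'ha \<Rightarrow> 'w)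
   \<Rightarrow> ('v list \<Rightarrow> 'h0 \<Rightarrow> 'v) \<Rightarrow> ('v list \<Rightarrow> 'h::times \<Rightarrow> 'l)
   \<Rightarrow> ('hom::comm_monoid_add \<Rightarrow> 'h)
   \<Rightarrow> (complex \<Rightarrow> nat \<Rightarrow> 'hom) \<Rightarrow> (complex \<Rightarrow> nat \<Rightarrow> 'h \<Rightarrow> 'hc)
   \<Rightarrow> (nat \<Rightarrow> nat set \<Rightarrow> 'hom) \<Rightarrow> (nat \<Rightarrow> nat set \<Rightarrow> 'h \<Rightarrow> ('h \<times> 'h0) list)
   \<Rightarrow> (nat \<Rightarrow> nat set set \<Rightarrow> 'hom) \<Rightarrow> (nat \<Rightarrow> nat set set \<Rightarrow> 'h \<Rightarrow> ('hc \<times> 'ha list) list)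
   \<Rightarrow> bool" where
  "two_morphism tauV tauW phi mu psi PD clsRho pbRho clsI pbI clsD pbD \<longleftrightarrow>
     (\<forall>\<rho> \<alpha> \<beta>. psi \<alpha> (\<beta> * PD (clsRho \<rho> (length \<alpha>))) = tauV \<alpha> (pbRho \<rho> (length \<alpha>) \<beta>)) \<and>
     (\<forall>\<alpha> I \<beta>. I \<subseteq> {..<length \<alpha>} \<and> 2 \<le> card I \<longrightarrow>
        psi \<alpha> (\<beta> * PD (clsI (length \<alpha>) I)) =
        sum_list (map (\<lambda>(b1, b0). psi (nths \<alpha> (- I) @ [mu (nths \<alpha> I) b0]) b1)
                      (pbI (length \<alpha>) I \<beta>))) \<and>
     (\<forall>\<alpha> S \<beta>. S \<subseteq> set_partitions (length \<alpha>) \<longrightarrow>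
        psi \<alpha> (\<beta> * PD (\<Sum>P\<in>S. clsD (length \<alpha>) P)) =
        (\<Sum>P\<in>S. bdry_term tauW phi pbD \<alpha> P \<beta>))"

end

theory Submission
  imports Defs
begin

text \<open>Evaluate \<open>\<psi>\<close> on \<open>\<beta> \<union> \<gamma>\<^sub>\<rho>\<close> in two ways: condition (a) gives
  \<open>\<tau>\<^sub>V(\<alpha>; \<iota>\<^sub>\<rho>\<^sup>* \<beta>)\<close>, while the class of \<open>\<iota>\<^sub>\<rho>(M\<^sub>n(C))\<close> is the boundary divisor
  \<open>\<Sum>\<^sub>P D\<^sub>P\<close>, on which condition (c) gives the sum of the boundary terms.\<close>

lemma two_morphism_scaling_fibre:
  assumes "two_morphism tauV tauW phi mu psi PD clsRho pbRho clsI pbI clsD pbD"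
  shows "psi \<alpha> (\<beta> * PD (clsRho \<rho> (length \<alpha>))) = tauV \<alpha> (pbRho \<rho> (length \<alpha>) \<beta>)"
  using assms unfolding two_morphism_def by blast

lemma two_morphism_boundary_divisor:
  assumes "two_morphism tauV tauW phi mu psi PD clsRho pbRho clsI pbI clsD pbD"
    and "S \<subseteq> set_partitions (length \<alpha>)"
  shows "psi \<alpha> (\<beta> * PD (\<Sum>P\<in>S. clsD (length \<alpha>) P)) = (\<Sum>P\<in>S. bdry_term tauW phi pbD \<alpha> P \<beta>)"
  using assms unfolding two_morphism_def by blast

theorem mainTheorem1:
  fixes tauV :: "'v list \<Rightarrow> 'hc \<Rightarrow> 'l::comm_monoid_add"
    and tauW :: "'w list \<Rightarrow> 'hc \<Rightarrow> 'l"
    and phi :: "'v list \<Rightarrow> 'ha \<Rightarrow> 'w"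
    and mu :: "'v list \<Rightarrow> 'h0 \<Rightarrow> 'v"
    and psi :: "'v list \<Rightarrow> 'h::times \<Rightarrow> 'l"
    and PD :: "'hom::comm_monoid_add \<Rightarrow> 'h"
    and clsRho :: "complex \<Rightarrow> nat \<Rightarrow> 'hom"
    and pbRho :: "complex \<Rightarrow> nat \<Rightarrow> 'h \<Rightarrow> 'hc"
    and clsI :: "nat \<Rightarrow> nat set \<Rightarrow> 'hom"
    and pbI :: "nat \<Rightarrow> nat set \<Rightarrow> 'h \<Rightarrow> ('h \<times> 'h0) list"
    and clsD :: "nat \<Rightarrow> nat set set \<Rightarrow> 'hom"
    and pbD :: "nat \<Rightarrow> nat set set \<Rightarrow> 'h \<Rightarrow> ('hc \<times> 'ha list) list"
    and \<rho> :: complex and \<alpha> :: "'v list" and \<beta> :: 'h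
  assumes psi: "two_morphism tauV tauW phi mu psi PD clsRho pbRho clsI pbI clsD pbD"
    and hom_class: "\<And>r m. clsRho r m = (\<Sum>P\<in>set_partitions m. clsD m P)"
  shows "tauV \<alpha> (pbRho \<rho> (length \<alpha>) \<beta>) =
         (\<Sum>P\<in>set_partitions (length \<alpha>). bdry_term tauW phi pbD \<alpha> P \<beta>)"
proof -
  have "tauV \<alpha> (pbRho \<rho> (length \<alpha>) \<beta>) = psi \<alpha> (\<beta> * PD (clsRho \<rho> (length \<alpha>)))"
    using two_morphism_scaling_fibre [OF psi] by simp
  also have "\<dots> = psi \<alpha> (\<beta> * PD (\<Sum>P\<in>set_partitions (length \<alpha>). clsD (length \<alpha>) P))"
    by (simp only: hom_class)
  also have "\<dots> = (\<Sum>P\<in>set_partitions (length \<alpha>). bdry_term tauW phi pbD \<alpha> P \<beta>)"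
    using two_morphism_boundary_divisor [OF psi] by blast
  finally show ?thesis .
qed

end
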